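(* Let $S$ be a finite set of at least two points in $\mathbb R^2$, let $\square$ be a minimal bounding square of $S$, and let $\mathrm{lfs}(x,y)$ denote the Euclidean distance from $(x,y)$ to the second nearest point of $S$. Then for every hierarchical clustering of $S$, the sum over its clusters of the perimeters of their convex hulls is at least $c\int_{\square} \frac{1}{\mathrm{lfs}(x,y)}\,dx\,dy$, for an absolute constant $c>0$.
   Context: A hierarchical clustering of a finite point set $S$ is a family of nonempty subsets of $S$ (clusters) containing $S$ and all singletons, any two of which are disjoint or nested, maximal with this property (equivalently a rooted binary tree whose leaves are the points). *)

theory Defs
  imports "HOL-Analysis.Analysis"
begin

type_synonym pt = "real ^ 2"

definition laminar :: "'a set set \<Rightarrow> bool" where
  "laminar H \<longleftrightarrow> (\<forall>A\<in>H. \<forall>B\<in>H. A \<inter> B = {} \<or> A \<subseteq> B \<or> B \<subseteq> A)"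

definition cluster_family :: "'a set \<Rightarrow> 'a set set \<Rightarrow> bool" where
  "cluster_family S H \<longleftrightarrow> (\<forall>C\<in>H. C \<noteq> {} \<and> C \<subseteq> S) \<and> S \<in> H \<and>
     (\<forall>x\<in>S. {x} \<in> H) \<and> laminar H"

definition hierarchical_clustering :: "'a set \<Rightarrow> 'a set set \<Rightarrow> bool" where
  "hierarchical_clustering S H \<longleftrightarrow> cluster_family S H \<and>
     (\<forall>H'. cluster_family S H' \<and> H \<subseteq> H' \<longrightarrow> H' = H)"

text \<open>Orientation test: nonnegative iff c lies to the left of or on the directed line a->b.\<close>
definition cross :: "pt \<Rightarrow> pt \<Rightarrow> pt \<Rightarrow> real" where
  "cross a b c = (b$1 - a$1) * (c$2 - a$2) - (b$2 - a$2) * (c$1 - a$1)"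

definition ccw_hull_list :: "pt set \<Rightarrow> pt list \<Rightarrow> bool" where
  "ccw_hull_list C vs \<longleftrightarrow> distinct vs \<and>
     set vs = {x. x extreme_point_of (convex hull C)} \<and>
     (\<forall>i<length vs. \<forall>p\<in>C. cross (vs ! i) (vs ! ((i + 1) mod length vs)) p \<ge> 0)"

definition cyclic_length :: "pt list \<Rightarrow> real" where
  "cyclic_length vs = (\<Sum>i<length vs. dist (vs ! i) (vs ! ((i + 1) mod length vs)))"

text \<open>Perimeter of the convex hull of a finite point set (a degenerate segment hull
  has perimeter twice its length, a point has perimeter 0).\<close>
definition hull_perimeter :: "pt set \<Rightarrow> real" where
  "hull_perimeter C = (SOME l. \<exists>vs. ccw_hull_list C vs \<and> l = cyclic_length vs)"

text \<open>Distance from p to the second nearest point of S.\<close>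
definition lfs :: "pt set \<Rightarrow> pt \<Rightarrow> real" where
  "lfs S p = Min {max (dist p q) (dist p q') | q q'. q \<in> S \<and> q' \<in> S \<and> q \<noteq> q'}"

definition min_bounding_square :: "pt set \<Rightarrow> pt set \<Rightarrow> bool" where
  "min_bounding_square S Q \<longleftrightarrow> (\<exists>a s. s \<ge> 0 \<and> Q = cbox a (a + (\<chi> i. s)) \<and> S \<subseteq> Q \<and>
     (\<forall>a' s'. s' \<ge> 0 \<and> S \<subseteq> cbox a' (a' + (\<chi> i. s')) \<longrightarrow> s \<le> s'))"

end

theory Submission
  imports Defs
begin

(* Since the perimeter of a convex hull is at least its diameter, it suffices to bound the
   integral by a multiple of the sum of the cluster diameters. Fix p, let m = lfs(p) and let a be
   a point of S with |p - a| <= m. Among the clusters containing a there is one, C, of diameter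
   < m/2 whose parent P has diameter >= m/2. Then p lies within 3m/2 of any point x of C, and one
   of the dyadic scales r = 3 diam(P) / 2^k lies in [3m/2, 3m), so 1/lfs(p) <= 3/r where p is in
   the cube of half-side r around x. Summing the functions (1/r) 1_cube over all parent-child
   pairs (P, C) and all scales bounds 1/lfs pointwise; the terms of one pair integrate to at most
   24 diam(P), and maximality of the clustering makes it binary, so the total is at most
   48 times the sum of the diameters. *)

section \<open>Orientation and convex position in the plane\<close>

lemma cross_rotate: "cross a b c = cross b c a"
  unfolding cross_def by (simp add: algebra_simps)

lemma cross_swap: "cross a c b = - cross a b c"
  unfolding cross_def by (simp add: algebra_simps)

lemma cross_degenerate [simp]: "cross a a c = 0" "cross a b a = 0" "cross a b b = 0"
  unfolding cross_def by simp_all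

lemma convex_left_halfplane: "convex {p. cross a b p \<ge> 0}"
proof (rule convexI)
  fix x y :: pt and u v :: real
  assume "x \<in> {p. cross a b p \<ge> 0}" "y \<in> {p. cross a b p \<ge> 0}" "0 \<le> u" "0 \<le> v" "u + v = 1"
  moreover have "cross a b (u *\<^sub>R x + v *\<^sub>R y) = u * cross a b x + v * cross a b y"
  proof -
    have v: "v = 1 - u" using \<open>u + v = 1\<close> by simp
    show ?thesis unfolding cross_def v by (simp add: algebra_simps)
  qed
  ultimately show "u *\<^sub>R x + v *\<^sub>R y \<in> {p. cross a b p \<ge> 0}" by simp
qed

text \<open>The orientations of the three sub-triangles at x are the barycentric coordinates of x
  (times cross a b c).\<close>
lemma mem_convex_hull_triangle:
  assumes "cross a b c > 0" and "cross a b x \<ge> 0" "cross b c x \<ge> 0" "cross c a x \<ge> 0"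
  shows "x \<in> convex hull {a, b, c}"
proof -
  define D where "D = cross a b c"
  have sum: "cross b c x + cross c a x + cross a b x = D"
    unfolding D_def cross_def by (simp add: algebra_simps)
  have expand: "D *\<^sub>R x = cross b c x *\<^sub>R a + cross c a x *\<^sub>R b + cross a b x *\<^sub>R c"
    unfolding D_def cross_def vec_eq_iff forall_2 by (simp add: algebra_simps)
  have "x = (1 / D) *\<^sub>R (cross b c x *\<^sub>R a + cross c a x *\<^sub>R b + cross a b x *\<^sub>R c)"
    using assms(1) unfolding D_def by (simp flip: expand[unfolded D_def])
  then have "x = (cross b c x / D) *\<^sub>R a + (cross c a x / D) *\<^sub>R b + (cross a b x / D) *\<^sub>R c"
    by (simp add: scaleR_add_right)
  moreover have "cross b c x / D + cross c a x / D + cross a b x / D = 1"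
    using sum assms(1) unfolding D_def by (simp flip: add_divide_distrib)
  moreover have "cross b c x / D \<ge> 0" "cross c a x / D \<ge> 0" "cross a b x / D \<ge> 0"
    using assms unfolding D_def by simp_all
  ultimately show ?thesis
    unfolding convex_hull_3 by blast
qed

definition lex_below :: "pt \<Rightarrow> pt \<Rightarrow> bool" where
  "lex_below e f \<longleftrightarrow> e$2 < f$2 \<or> (e$2 = f$2 \<and> e$1 < f$1)"

lemma lex_below_trans: "lex_below e f \<Longrightarrow> lex_below f g \<Longrightarrow> lex_below e g"
  unfolding lex_below_def by auto

lemma lex_below_total: "e \<noteq> f \<Longrightarrow> lex_below e f \<or> lex_below f e"
  unfolding lex_below_def vec_eq_iff forall_2 by auto

lemma finite_has_lex_lowest:
  assumes "finite E" "E \<noteq> {}"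
  obtains e where "e \<in> E" "\<And>f. f \<in> E \<Longrightarrow> f \<noteq> e \<Longrightarrow> lex_below e f"
  using assms
proof (induction E arbitrary: thesis rule: finite_ne_induct)
  case (singleton x)
  then show ?case by blast
next
  case (insert x F)
  obtain e where e: "e \<in> F" "\<And>f. f \<in> F \<Longrightarrow> f \<noteq> e \<Longrightarrow> lex_below e f"
    using insert.IH by blast
  have "x \<noteq> e" using e(1) insert.hyps by blast
  then consider "lex_below x e" | "lex_below e x" using lex_below_total by blast
  then show ?case
  proof cases
    case 1
    then show ?thesis using insert.prems e lex_below_trans by blast
  next
    case 2
    then show ?thesis using insert.prems e by blast
  qed
qed

text \<open>Seen from e, the points lex-above e span angles in [0, pi), on which the sign of cross
  is the angular order.\<close>
lemma cross_angle_trans: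
  assumes "lex_below e f" "lex_below e g" "lex_below e h" "cross e f g > 0" "cross e g h > 0"
  shows "cross e f h > 0"
proof (rule ccontr)
  assume "\<not> cross e f h > 0"
  then have hf: "cross e h f \<ge> 0" using cross_swap[of e h f] by simp
  have heights: "f$2 - e$2 \<ge> 0" "g$2 - e$2 \<ge> 0" "h$2 - e$2 \<ge> 0"
    using assms(1-3) unfolding lex_below_def by auto
  have "cross e f g * (h$2 - e$2) + cross e g h * (f$2 - e$2) + cross e h f * (g$2 - e$2) = 0"
    unfolding cross_def by (simp add: algebra_simps)
  moreover have "cross e f g * (h$2 - e$2) \<ge> 0" "cross e g h * (f$2 - e$2) \<ge> 0"
    "cross e h f * (g$2 - e$2) \<ge> 0"
    using assms(4,5) hf heights by simp_all
  ultimately have "cross e f g * (h$2 - e$2) = 0" "cross e g h * (f$2 - e$2) = 0"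
    by linarith+
  then have "h$2 = e$2" "f$2 = e$2" using assms(4,5) by simp_all
  then show False using assms unfolding lex_below_def cross_def
    by (auto simp: mult_less_0_iff zero_less_mult_iff)
qed

lemma cross_eq_0_same_ray:
  assumes "lex_below e f" "lex_below e g" "cross e f g = 0"
  obtains t where "t > 0" "g = e + t *\<^sub>R (f - e)"
proof -
  have cr: "(f$1 - e$1) * (g$2 - e$2) = (f$2 - e$2) * (g$1 - e$1)"
    using assms(3) unfolding cross_def by simp
  obtain t where t: "t > 0" "g$1 - e$1 = t * (f$1 - e$1)" "g$2 - e$2 = t * (f$2 - e$2)"
  proof (cases "f$2 = e$2")
    case True
    then show ?thesis
      using that[of "(g$1 - e$1) / (f$1 - e$1)"] assms(1,2) cr unfolding lex_below_def by auto
  next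
    case False
    then have "f$2 > e$2" using assms(1) unfolding lex_below_def by auto
    moreover have "g$2 > e$2"
      using assms(2) cr \<open>f$2 > e$2\<close> unfolding lex_below_def by auto
    ultimately show ?thesis
      using that[of "(g$2 - e$2) / (f$2 - e$2)"] cr by (auto simp: field_simps)
  qed
  then show ?thesis
    using that[of t] unfolding vec_eq_iff forall_2 by (simp add: algebra_simps)
qed

definition convex_independent :: "'a::real_vector set \<Rightarrow> bool" where
  "convex_independent S \<longleftrightarrow> (\<forall>a\<in>S. a \<notin> convex hull (S - {a}))"

lemma convex_independentD:
  assumes "convex_independent S" "F \<subseteq> S" "a \<in> S" "a \<in> convex hull F"
  shows "a \<in> F"
proof (rule ccontr)
  assume "a \<notin> F"
  then have "convex hull F \<subseteq> convex hull (S - {a})" using assms(2) by (intro hull_mono) blast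
  then show False using assms unfolding convex_independent_def by blast
qed

lemma convex_independent_extreme_points:
  "convex_independent {x. x extreme_point_of (convex hull C)}"
  unfolding convex_independent_def
proof (intro ballI notI)
  fix a
  let ?E = "{x. x extreme_point_of (convex hull C)}"
  assume a: "a \<in> ?E" and in_hull: "a \<in> convex hull (?E - {a})"
  have "convex hull (?E - {a}) \<subseteq> convex hull C"
    using extreme_point_of_convex_hull by (intro hull_mono) blast
  then have "a extreme_point_of (convex hull (?E - {a}))"
    using a in_hull unfolding extreme_point_of_def by blast
  then show False using extreme_point_of_convex_hull by blast
qed

lemma angular_order_total:
  assumes "convex_independent S" "e \<in> S" "f \<in> S" "g \<in> S" "f \<noteq> g"
    and "lex_below e f" "lex_below e g"
  shows "cross e f g \<noteq> 0"
proof
  assume "cross e f g = 0"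
  then obtain t where t: "t > 0" "g = e + t *\<^sub>R (f - e)"
    using assms(6,7) cross_eq_0_same_ray by blast
  have irrefl: "e \<noteq> f" "e \<noteq> g" using assms(6,7) unfolding lex_below_def by auto
  show False
  proof (cases "t \<le> 1")
    case True
    have "g = (1 - t) *\<^sub>R e + t *\<^sub>R f" using t by (simp add: algebra_simps)
    then have "g \<in> convex hull {e, f}"
      using True t unfolding segment_convex_hull[symmetric] closed_segment_def by auto
    then show False using convex_independentD[of S "{e, f}" g] assms irrefl by auto
  next
    case False
    have "f = e + (1/t) *\<^sub>R (g - e)" using t by simp
    then have "f = (1 - 1/t) *\<^sub>R e + (1/t) *\<^sub>R g" by (simp add: algebra_simps)
    then have "f \<in> convex hull {e, g}"
      using False unfolding segment_convex_hull[symmetric] closed_segment_def by auto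
    then show False using convex_independentD[of S "{e, g}" f] assms irrefl by auto
  qed
qed

lemma finite_strict_total_order_sorted_list:
  assumes "finite A"
    and trans: "\<And>x y z. x \<in> A \<Longrightarrow> y \<in> A \<Longrightarrow> z \<in> A \<Longrightarrow> R x y \<Longrightarrow> R y z \<Longrightarrow> R x z"
    and total: "\<And>x y. x \<in> A \<Longrightarrow> y \<in> A \<Longrightarrow> x \<noteq> y \<Longrightarrow> R x y \<or> R y x"
    and irrefl: "\<And>x. x \<in> A \<Longrightarrow> \<not> R x x"
  obtains xs where "distinct xs" "set xs = A" "sorted_wrt R xs"
  using assms
proof (induction A arbitrary: thesis rule: finite_induct)
  case empty
  then show ?case using empty.prems(1)[of "[]"] by simp
next
  case (insert x F)
  have trans': "R a c" if "a \<in> F" "b \<in> F" "c \<in> F" "R a b" "R b c" for a b c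
    using insert.prems(2)[of a b c] that by simp
  have total': "R a b \<or> R b a" if "a \<in> F" "b \<in> F" "a \<noteq> b" for a b
    using insert.prems(3)[of a b] that by simp
  have irrefl': "\<not> R a a" if "a \<in> F" for a
    using insert.prems(4)[of a] that by simp
  obtain xs where xs: "distinct xs" "set xs = F" "sorted_wrt R xs"
    by (rule insert.IH[OF _ trans' total' irrefl'])
  have x_cmp: "R y x \<or> R x y" if "y \<in> F" for y
    using insert.prems(3)[of y x] insert.hyps(2) that by auto
  have x_cmp_excl: "\<not> (R y x \<and> R x y)" if "y \<in> F" for y
    using insert.prems(2)[of y x y] insert.prems(4)[of y] that by auto
  let ?lo = "filter (\<lambda>y. R y x) xs" and ?hi = "filter (\<lambda>y. R x y) xs"
  have "distinct (?lo @ x # ?hi)"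
    using xs(1,2) insert.hyps(2) x_cmp_excl by (auto simp: distinct_append)
  moreover have "set (?lo @ x # ?hi) = insert x F"
    using xs(2) x_cmp by auto
  moreover have "sorted_wrt R (?lo @ x # ?hi)"
    unfolding sorted_wrt_append
    using sorted_wrt_filter[OF xs(3)] xs(2) insert.prems(2) by auto
  ultimately show ?case using insert.prems(1) by blast
qed

text \<open>Two consecutive rays a, b of a fan around e, and a third point g of the fan: if g were
  strictly right of a b, then a or b would lie in a triangle spanned by the other points.\<close>
lemma fan_edge_left:
  assumes indep: "convex_independent S" and "e \<in> S" "a \<in> S" "b \<in> S" "g \<in> S"
    and "g \<noteq> a" "g \<noteq> b" and ab: "cross e a b > 0"
    and g: "g = e \<or> (cross e g a > 0 \<and> cross e g b > 0) \<or> (cross e a g > 0 \<and> cross e b g > 0)"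
  shows "cross a b g \<ge> 0"
proof (rule ccontr)
  assume right: "\<not> cross a b g \<ge> 0"
  have distinct: "a \<noteq> e" "b \<noteq> e" "a \<noteq> b" using ab by auto
  consider "g = e" | "cross e g a > 0" "cross e g b > 0" | "cross e a g > 0" "cross e b g > 0"
    using g by blast
  then show False
  proof cases
    case 1
    then show False using ab right cross_rotate[of a b e] cross_rotate[of b e a] by simp
  next
    case 2
    have "cross g b a = - cross a b g" "cross b e a = cross e a b"
      unfolding cross_def by (simp_all add: algebra_simps)
    then have "a \<in> convex hull {e, g, b}"
      using 2 ab right by (intro mem_convex_hull_triangle) simp_all
    then have "a \<in> {e, g, b}" using convex_independentD[OF indep, of "{e, g, b}" a] assms by simp
    then show False using distinct \<open>g \<noteq> a\<close> by blast
  next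
    case 3
    have "cross a g b = - cross a b g" "cross g e b = cross e b g"
      unfolding cross_def by (simp_all add: algebra_simps)
    then have "b \<in> convex hull {e, a, g}"
      using 3 ab right by (intro mem_convex_hull_triangle) simp_all
    then have "b \<in> {e, a, g}" using convex_independentD[OF indep, of "{e, a, g}" b] assms by simp
    then show False using distinct \<open>g \<noteq> b\<close> by blast
  qed
qed

lemma fan_consecutive_edge_left:
  assumes indep: "convex_independent (insert e (set ys))"
    and sorted: "sorted_wrt (\<lambda>f g. cross e f g > 0) ys"
    and k: "Suc k < length ys" and g: "g \<in> insert e (set ys)"
  shows "cross (ys ! k) (ys ! Suc k) g \<ge> 0"
proof (cases "g = ys ! k \<or> g = ys ! Suc k")
  case False
  let ?a = "ys ! k" and ?b = "ys ! Suc k"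
  have less: "cross e (ys ! j) (ys ! l) > 0" if "j < l" "l < length ys" for j l
    using sorted that by (simp add: sorted_wrt_iff_nth_less)
  have "g = e \<or> (cross e g ?a > 0 \<and> cross e g ?b > 0) \<or> (cross e ?a g > 0 \<and> cross e ?b g > 0)"
  proof (cases "g = e")
    case False
    then obtain j where j: "j < length ys" "g = ys ! j" using g by (auto simp: in_set_conv_nth)
    then have "j < k \<or> Suc k < j" using \<open>\<not> (g = ?a \<or> g = ?b)\<close> by (metis not_less_eq less_antisym)
    then show ?thesis using less j k by (auto intro: less_trans)
  qed simp
  moreover have "?a \<in> set ys" "?b \<in> set ys" using k by simp_all
  ultimately show ?thesis
    using fan_edge_left[OF indep, of e ?a ?b g] g less[of k "Suc k"] k False by simp
qed auto

lemma fan_edges_left: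
  assumes indep: "convex_independent (insert e (set ys))"
    and sorted: "sorted_wrt (\<lambda>f g. cross e f g > 0) ys"
    and i: "i < length (e # ys)" and g: "g \<in> insert e (set ys)"
  shows "cross ((e # ys) ! i) ((e # ys) ! ((i + 1) mod length (e # ys))) g \<ge> 0"
proof -
  let ?n = "length ys"
  have less: "cross e (ys ! j) (ys ! l) > 0" if "j < l" "l < ?n" for j l
    using sorted that by (simp add: sorted_wrt_iff_nth_less)
  have g_cases: "g = e \<or> (\<exists>j<?n. g = ys ! j)"
    using g by (auto simp: in_set_conv_nth)
  consider (single) "?n = 0" | (first) "i = 0" "?n > 0" | (last) "i = ?n" "?n > 0"
    | (middle) k where "i = Suc k" "Suc k < ?n"
    using i by (cases i) (auto, metis Suc_lessI)
  then show ?thesis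
  proof cases
    case single
    then show ?thesis using i by simp
  next
    case first
    have "cross e (ys ! 0) g \<ge> 0"
    proof (cases "g = e")
      case False
      then obtain j where "j < ?n" "g = ys ! j" using g_cases by blast
      then show ?thesis using less[of 0 j] by (cases "j = 0") auto
    qed simp
    then show ?thesis using first by simp
  next
    case last
    have "cross e g (ys ! (?n - 1)) \<ge> 0"
    proof (cases "g = e")
      case False
      then obtain j where j: "j < ?n" "g = ys ! j" using g_cases by blast
      then consider "j < ?n - 1" | "j = ?n - 1" by linarith
      then show ?thesis using less[of j "?n - 1"] j last(2) by cases auto
    qed simp
    then show ?thesis
      using last cross_rotate[of "ys ! (?n - 1)" e g] by (simp add: nth_Cons')
  next
    case middle
    then show ?thesis using fan_consecutive_edge_left[OF indep sorted _ g] by simp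
  qed
qed

lemma convex_hull_extreme_points_eq:
  fixes C :: "'a::euclidean_space set"
  assumes "finite C"
  shows "convex hull {x. x extreme_point_of (convex hull C)} = convex hull C"
  using Krein_Milman_Minkowski[of "convex hull C"] assms
  by (simp add: compact_convex_hull finite_imp_compact)

lemma angular_sorted_list:
  assumes "finite E" "convex_independent E" "e \<in> E"
    and lowest: "\<And>f. f \<in> E \<Longrightarrow> f \<noteq> e \<Longrightarrow> lex_below e f"
  obtains ys where "distinct ys" "set ys = E - {e}" "sorted_wrt (\<lambda>f g. cross e f g > 0) ys"
proof (rule finite_strict_total_order_sorted_list[of "E - {e}" "\<lambda>f g. cross e f g > 0"])
  show "cross e f h > 0" if "f \<in> E - {e}" "g \<in> E - {e}" "h \<in> E - {e}"
    "cross e f g > 0" "cross e g h > 0" for f g h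
    using cross_angle_trans[of e f g h] lowest that by blast
  show "cross e f g > 0 \<or> cross e g f > 0" if "f \<in> E - {e}" "g \<in> E - {e}" "f \<noteq> g" for f g
    using angular_order_total[OF assms(2,3), of f g] lowest that cross_swap[of e f g] by force
qed (use assms(1) that in auto)

text \<open>Since hull_perimeter chooses among ccw hull lists, it is only controlled once one exists:
  the extreme points sorted by angle around the lex-lowest of them.\<close>
lemma ccw_hull_list_exists:
  assumes "finite C" "C \<noteq> {}"
  shows "\<exists>vs. ccw_hull_list C vs"
proof -
  define E where "E = {x. x extreme_point_of (convex hull C)}"
  have hull_E: "convex hull E = convex hull C"
    unfolding E_def using assms(1) by (rule convex_hull_extreme_points_eq)
  have "E \<subseteq> C" using extreme_point_of_convex_hull E_def by blast
  then have "finite E" using assms(1) finite_subset by blast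
  have "E \<noteq> {}" using hull_E assms(2) hull_subset[of C convex] by auto
  have indep: "convex_independent E" unfolding E_def by (rule convex_independent_extreme_points)
  obtain e where e: "e \<in> E" "\<And>f. f \<in> E \<Longrightarrow> f \<noteq> e \<Longrightarrow> lex_below e f"
    using finite_has_lex_lowest[OF \<open>finite E\<close> \<open>E \<noteq> {}\<close>] by blast
  obtain ys where ys: "distinct ys" "set ys = E - {e}" "sorted_wrt (\<lambda>f g. cross e f g > 0) ys"
    using angular_sorted_list[OF \<open>finite E\<close> indep e] by blast
  have E_eq: "insert e (set ys) = E" using ys(2) e(1) by blast
  have "ccw_hull_list C (e # ys)"
    unfolding ccw_hull_list_def
  proof (intro conjI allI impI ballI)
    show "distinct (e # ys)" using ys(1,2) by simp
    show "set (e # ys) = {x. x extreme_point_of convex hull C}" using E_eq E_def by simp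
  next
    fix i p assume i: "i < length (e # ys)" and "p \<in> C"
    let ?l = "(e # ys) ! i" and ?r = "(e # ys) ! ((i + 1) mod length (e # ys))"
    have "convex hull E \<subseteq> {q. cross ?l ?r q \<ge> 0}"
      using fan_edges_left[of e ys i] indep ys(3) i E_eq convex_left_halfplane
      by (intro hull_minimal) auto
    then show "cross ?l ?r p \<ge> 0"
      using \<open>p \<in> C\<close> hull_E hull_subset[of C convex] by blast
  qed
  then show ?thesis by blast
qed

section \<open>The hull perimeter dominates the diameter\<close>

lemma hull_perimeter_eq:
  assumes "finite C" "C \<noteq> {}"
  obtains vs where "ccw_hull_list C vs" "hull_perimeter C = cyclic_length vs"
proof -
  have "\<exists>vs. ccw_hull_list C vs \<and> hull_perimeter C = cyclic_length vs"
    unfolding hull_perimeter_def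
    by (rule someI_ex[where P = "\<lambda>l. \<exists>vs. ccw_hull_list C vs \<and> l = cyclic_length vs"])
      (use ccw_hull_list_exists[OF assms] in blast)
  then show ?thesis using that by blast
qed

lemma dist_le_sum_cyclic_edges:
  assumes "i \<le> j" "j < length vs"
  shows "dist (vs ! i) (vs ! j) \<le> (\<Sum>k\<in>{i..<j}. dist (vs ! k) (vs ! ((k + 1) mod length vs)))"
  using assms
proof (induction j)
  case 0
  then show ?case by simp
next
  case (Suc j)
  show ?case
  proof (cases "i = Suc j")
    case False
    then have "i \<le> j" using Suc.prems by simp
    have "dist (vs ! i) (vs ! Suc j) \<le> dist (vs ! i) (vs ! j) + dist (vs ! j) (vs ! Suc j)"
      by (rule dist_triangle)
    also have "\<dots> \<le> (\<Sum>k\<in>{i..<j}. dist (vs ! k) (vs ! ((k + 1) mod length vs)))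
        + dist (vs ! j) (vs ! ((j + 1) mod length vs))"
      using Suc \<open>i \<le> j\<close> by simp
    also have "\<dots> = (\<Sum>k\<in>{i..<Suc j}. dist (vs ! k) (vs ! ((k + 1) mod length vs)))"
      using \<open>i \<le> j\<close> by simp
    finally show ?thesis .
  qed simp
qed

lemma dist_le_cyclic_length:
  assumes "i < length vs" "j < length vs"
  shows "dist (vs ! i) (vs ! j) \<le> cyclic_length vs"
proof -
  have "dist (vs ! i) (vs ! j) \<le> cyclic_length vs" if "i \<le> j" "j < length vs" for i j
  proof -
    have "dist (vs ! i) (vs ! j) \<le> (\<Sum>k\<in>{i..<j}. dist (vs ! k) (vs ! ((k + 1) mod length vs)))"
      using that by (rule dist_le_sum_cyclic_edges)
    also have "\<dots> \<le> cyclic_length vs"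
      unfolding cyclic_length_def using that by (intro sum_mono2) auto
    finally show ?thesis .
  qed
  then show ?thesis using assms by (metis dist_commute nat_le_linear)
qed

lemma diameter_le_hull_perimeter:
  assumes "finite C" "C \<noteq> {}"
  shows "diameter C \<le> hull_perimeter C"
proof -
  obtain vs where vs: "ccw_hull_list C vs" "hull_perimeter C = cyclic_length vs"
    using hull_perimeter_eq[OF assms] .
  let ?E = "set vs"
  have hull_E: "convex hull ?E = convex hull C"
    using vs(1) convex_hull_extreme_points_eq[OF assms(1)] by (simp add: ccw_hull_list_def)
  then have "?E \<noteq> {}" using assms(2) hull_subset[of C convex] by auto
  then obtain u v where uv: "u \<in> ?E" "v \<in> ?E"
    and far: "\<forall>x\<in>convex hull ?E. \<forall>y\<in>convex hull ?E. norm (x - y) \<le> norm (u - v)"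
    using simplex_extremal_le[of ?E] by blast
  have "norm (u - v) \<le> cyclic_length vs"
    using uv dist_le_cyclic_length[of _ vs] by (metis dist_norm in_set_conv_nth)
  then have "diameter C \<le> cyclic_length vs"
    using far hull_E hull_subset[of C convex] assms(2) by (intro diameter_le) force+
  then show ?thesis using vs(2) by simp
qed

section \<open>Hierarchical clusterings\<close>

definition children :: "'a set set \<Rightarrow> 'a set \<Rightarrow> 'a set set" where
  "children H P = {C \<in> H. C \<subset> P \<and> (\<forall>D\<in>H. \<not> (C \<subset> D \<and> D \<subset> P))}"

lemma cluster_familyD:
  assumes "cluster_family S H"
  shows "\<And>C. C \<in> H \<Longrightarrow> C \<noteq> {}" "\<And>C. C \<in> H \<Longrightarrow> C \<subseteq> S" "S \<in> H"
    "\<And>x. x \<in> S \<Longrightarrow> {x} \<in> H" "laminar H"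
  using assms unfolding cluster_family_def by auto

lemma hierarchical_clustering_cluster_family:
  "hierarchical_clustering S H \<Longrightarrow> cluster_family S H"
  unfolding hierarchical_clustering_def by blast

lemma finite_cluster:
  assumes "cluster_family S H" "finite S" "C \<in> H"
  shows "finite C"
  using cluster_familyD(2)[OF assms(1,3)] assms(2) by (rule finite_subset)

lemma finite_cluster_family:
  assumes "cluster_family S H" "finite S"
  shows "finite H"
proof -
  have "H \<subseteq> Pow S" using cluster_familyD(2)[OF assms(1)] by blast
  then show ?thesis using assms(2) by (simp add: finite_subset)
qed

lemma children_disjoint:
  assumes "laminar H" "C1 \<in> children H P" "C2 \<in> children H P" "C1 \<noteq> C2"
  shows "C1 \<inter> C2 = {}"
proof -
  have "C1 \<in> H" "C2 \<in> H" "C1 \<subset> P" "C2 \<subset> P"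
    and "\<not> C1 \<subset> C2" "\<not> C2 \<subset> C1"
    using assms(2,3) unfolding children_def by auto
  then show ?thesis using assms(1,4) unfolding laminar_def by blast
qed

lemma laminar_insert:
  assumes "laminar H" "\<And>X. X \<in> H \<Longrightarrow> U \<inter> X = {} \<or> U \<subseteq> X \<or> X \<subseteq> U"
  shows "laminar (insert U H)"
  using assms unfolding laminar_def by (simp add: Int_commute disj_commute)

lemma child_meets_cluster:
  assumes lam: "laminar H" and "P \<in> H" "C \<in> children H P" "X \<in> H" "C \<inter> X \<noteq> {}"
  shows "X \<subseteq> C \<or> P \<subseteq> X"
proof -
  have C: "C \<in> H" "C \<subset> P" and no_between: "\<And>D. D \<in> H \<Longrightarrow> C \<subset> D \<Longrightarrow> D \<subset> P \<Longrightarrow> False"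
    using assms(3) unfolding children_def by auto
  have "X \<subseteq> C \<or> C \<subseteq> X" using lam C(1) assms(4,5) unfolding laminar_def by blast
  moreover have "X \<subseteq> P \<or> P \<subseteq> X" if "C \<subseteq> X"
    using lam assms(2,4,5) C(2) that unfolding laminar_def by blast
  ultimately show ?thesis using no_between[OF assms(4)] C(2) by blast
qed

lemma laminar_insert_union_children:
  assumes lam: "laminar H" and "P \<in> H" "C1 \<in> children H P" "C2 \<in> children H P"
  shows "laminar (insert (C1 \<union> C2) H)"
proof (rule laminar_insert[OF lam])
  fix X assume "X \<in> H"
  have "C1 \<subseteq> P" "C2 \<subseteq> P" using assms(3,4) unfolding children_def by auto
  then show "(C1 \<union> C2) \<inter> X = {} \<or> C1 \<union> C2 \<subseteq> X \<or> X \<subseteq> C1 \<union> C2"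
    using child_meets_cluster[OF lam \<open>P \<in> H\<close> assms(3) \<open>X \<in> H\<close>]
      child_meets_cluster[OF lam \<open>P \<in> H\<close> assms(4) \<open>X \<in> H\<close>] by blast
qed

text \<open>Merging two children of P would refine H, so maximality leaves room for at most two.\<close>
lemma card_children_le_2:
  assumes hc: "hierarchical_clustering S H" and "P \<in> H"
  shows "card (children H P) \<le> 2"
proof (rule ccontr)
  assume "\<not> ?thesis"
  then obtain C1 C2 C3 where C: "C1 \<in> children H P" "C2 \<in> children H P" "C3 \<in> children H P"
    and distinct: "C1 \<noteq> C2" "C1 \<noteq> C3" "C2 \<noteq> C3"
    by (auto simp: numeral_eq_Suc card_le_Suc_iff not_le Suc_le_eq[symmetric])
  note cf_facts = cluster_familyD[OF hierarchical_clustering_cluster_family[OF hc]]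
  have sub: "C1 \<subset> P" "C2 \<subset> P" "C3 \<subset> P" "C1 \<in> H" "C2 \<in> H" "C3 \<in> H"
    using C unfolding children_def by auto
  have "C1 \<inter> C3 = {}" "C2 \<inter> C3 = {}" "C1 \<inter> C2 = {}"
    using children_disjoint[OF cf_facts(5)] C distinct by auto
  moreover have "C1 \<noteq> {}" "C2 \<noteq> {}" "C3 \<noteq> {}" using cf_facts(1) sub by auto
  ultimately have strict: "C1 \<subset> C1 \<union> C2" "C1 \<union> C2 \<subset> P"
    using sub C by blast+
  have "cluster_family S (insert (C1 \<union> C2) H)"
    using cf_facts sub laminar_insert_union_children[OF cf_facts(5) \<open>P \<in> H\<close> C(1,2)] \<open>P \<in> H\<close>
    unfolding cluster_family_def by auto
  then have "C1 \<union> C2 \<in> H" using hc unfolding hierarchical_clustering_def by blast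
  then show False using C(1) strict unfolding children_def by blast
qed

lemma cluster_family_child_at_scale:
  fixes S :: "'a::metric_space set"
  assumes cf: "cluster_family S H" and "finite S" "a \<in> S" "0 < d" "d \<le> diameter S"
  obtains P C where "P \<in> H" "C \<in> children H P" "a \<in> C" "diameter C < d" "d \<le> diameter P"
proof -
  note cf_facts = cluster_familyD[OF cf]
  have "finite H" using finite_cluster_family[OF cf \<open>finite S\<close>] .
  define T where "T = {C \<in> H. a \<in> C \<and> diameter C < d}"
  have "{a} \<in> T" unfolding T_def using cf_facts(4) assms(3,4) by simp
  moreover have "finite T" using \<open>finite H\<close> unfolding T_def by simp
  ultimately obtain C where C: "C \<in> T" and C_max: "\<And>B. B \<in> T \<Longrightarrow> C \<subseteq> B \<Longrightarrow> C = B"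
    using finite_has_maximal[of T] by blast
  have "C \<subset> S" using C cf_facts(2) assms(5) unfolding T_def by auto
  define U where "U = {D \<in> H. C \<subset> D}"
  have "S \<in> U" unfolding U_def using cf_facts(3) \<open>C \<subset> S\<close> by blast
  moreover have "finite U" using \<open>finite H\<close> unfolding U_def by simp
  ultimately obtain P where P: "P \<in> U" and P_min: "\<And>B. B \<in> U \<Longrightarrow> B \<subseteq> P \<Longrightarrow> P = B"
    using finite_has_minimal[of U] by blast
  have P_H: "P \<in> H" "C \<subset> P" using P unfolding U_def by auto
  have C_H: "C \<in> H" "a \<in> C" "diameter C < d" using C unfolding T_def by auto
  have "\<not> (C \<subset> D \<and> D \<subset> P)" if "D \<in> H" for D
  proof
    assume between: "C \<subset> D \<and> D \<subset> P"
    then have "D \<in> U" using that unfolding U_def by simp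
    then show False using P_min[of D] between by blast
  qed
  then have "C \<in> children H P" using C_H P_H unfolding children_def by blast
  moreover have "d \<le> diameter P"
  proof (rule ccontr)
    assume "\<not> d \<le> diameter P"
    then have "P \<in> T" using P_H C_H unfolding T_def by auto
    then show False using C_max[of P] P_H(2) by blast
  qed
  ultimately show ?thesis using that P_H(1) C_H(2,3) by blast
qed

section \<open>Local feature size\<close>

lemma card_ge_2E:
  assumes "card S \<ge> 2"
  obtains q q' where "q \<in> S" "q' \<in> S" "q \<noteq> q'"
  using assms by (auto simp: numeral_2_eq_2 card_le_Suc_iff)

lemma finite_lfs_candidates:
  assumes "finite S"
  shows "finite {max (dist p q) (dist p q') | q q'. q \<in> S \<and> q' \<in> S \<and> q \<noteq> q'}"
proof (rule finite_subset)
  show "finite {max (dist p q) (dist p q') | q q'. q \<in> S \<and> q' \<in> S}"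
    by (rule finite_image_set2) (simp_all add: assms)
qed blast

lemma lfs_le:
  assumes "finite S" "q \<in> S" "q' \<in> S" "q \<noteq> q'"
  shows "lfs S p \<le> max (dist p q) (dist p q')"
  unfolding lfs_def using assms by (intro Min_le finite_lfs_candidates) blast+

lemma lfs_attained:
  assumes "finite S" "card S \<ge> 2"
  obtains q q' where "q \<in> S" "q' \<in> S" "q \<noteq> q'" "lfs S p = max (dist p q) (dist p q')"
proof -
  obtain q q' where "q \<in> S" "q' \<in> S" "q \<noteq> q'" using card_ge_2E[OF assms(2)] .
  then have "lfs S p \<in> {max (dist p q) (dist p q') | q q'. q \<in> S \<and> q' \<in> S \<and> q \<noteq> q'}"
    unfolding lfs_def by (intro Min_in finite_lfs_candidates assms(1)) blast
  then show ?thesis using that by blast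
qed

lemma lfs_ge_half_separation:
  assumes "finite S" "card S \<ge> 2"
  obtains r where "r > 0" "\<And>p. r \<le> lfs S p"
proof -
  define D where "D = {dist q q' | q q'. q \<in> S \<and> q' \<in> S \<and> q \<noteq> q'}"
  have "finite D"
  proof (rule finite_subset)
    show "finite {dist q q' | q q'. q \<in> S \<and> q' \<in> S}"
      by (rule finite_image_set2) (simp_all add: assms(1))
  qed (auto simp: D_def)
  obtain q q' where "q \<in> S" "q' \<in> S" "q \<noteq> q'" using card_ge_2E[OF assms(2)] .
  then have "D \<noteq> {}" unfolding D_def by blast
  have "Min D > 0" using Min_in[OF \<open>finite D\<close> \<open>D \<noteq> {}\<close>] unfolding D_def by auto
  moreover have "Min D / 2 \<le> lfs S p" for p
  proof -
    obtain q q' where q: "q \<in> S" "q' \<in> S" "q \<noteq> q'" "lfs S p = max (dist p q) (dist p q')"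
      using lfs_attained[OF assms] .
    have "Min D \<le> dist q q'" using \<open>finite D\<close> q(1-3) unfolding D_def by (intro Min_le) auto
    also have "\<dots> \<le> dist p q + dist p q'" by (rule dist_triangle3)
    finally show ?thesis using q(4) by linarith
  qed
  ultimately show ?thesis using that[of "Min D / 2"] by simp
qed

lemma bounding_cube_of_side_diameter:
  fixes S :: "(real ^ 'n) set"
  assumes "finite S" "S \<noteq> {}"
  obtains a where "S \<subseteq> cbox a (a + (\<chi> i. diameter S))"
proof
  define a :: "real ^ 'n" where "a = (\<chi> i. Min ((\<lambda>q. q $ i) ` S))"
  show "S \<subseteq> cbox a (a + (\<chi> i. diameter S))"
  proof
    fix q assume "q \<in> S"
    have "a $ i \<le> q $ i \<and> q $ i \<le> a $ i + diameter S" for i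
    proof -
      have "Min ((\<lambda>q. q $ i) ` S) \<in> (\<lambda>q. q $ i) ` S" using assms by simp
      then obtain q0 where q0: "q0 \<in> S" "a $ i = q0 $ i" unfolding a_def by auto
      have "q $ i - q0 $ i \<le> norm (q - q0)"
        using component_le_norm_cart[of "q - q0" i] by simp
      also have "\<dots> \<le> diameter S"
        using diameter_bounded_bound[OF finite_imp_bounded[OF assms(1)] \<open>q \<in> S\<close> q0(1)]
        by (simp add: dist_norm)
      finally have "q $ i - q0 $ i \<le> diameter S" .
      moreover have "a $ i \<le> q $ i" unfolding a_def using assms(1) \<open>q \<in> S\<close> by simp
      ultimately show ?thesis using q0(2) by simp
    qed
    then show "q \<in> cbox a (a + (\<chi> i. diameter S))" unfolding mem_box_cart by simp
  qed
qed

lemma min_bounding_square_dist_le: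
  assumes "min_bounding_square S Q" "finite S" "S \<noteq> {}" "x \<in> Q" "y \<in> Q"
  shows "dist x y \<le> 2 * diameter S"
proof -
  obtain a s where Q: "Q = cbox a (a + (\<chi> i. s))"
    and minimal: "\<And>a' s'. s' \<ge> 0 \<Longrightarrow> S \<subseteq> cbox a' (a' + (\<chi> i. s')) \<Longrightarrow> s \<le> s'"
    using assms(1) unfolding min_bounding_square_def by blast
  obtain a' where "S \<subseteq> cbox a' (a' + (\<chi> i. diameter S))"
    using bounding_cube_of_side_diameter[OF assms(2,3)] .
  then have "s \<le> diameter S"
    using minimal diameter_ge_0[OF finite_imp_bounded[OF assms(2)]] by blast
  have box: "a $ i \<le> x $ i \<and> x $ i \<le> a $ i + s \<and> a $ i \<le> y $ i \<and> y $ i \<le> a $ i + s" for i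
    using assms(4,5) unfolding Q mem_box_cart by auto
  have coord: "\<bar>x $ i - y $ i\<bar> \<le> s" for i
    using box[of i] by (auto simp: abs_le_iff)
  have "norm (x - y) \<le> \<bar>x $ 1 - y $ 1\<bar> + \<bar>x $ 2 - y $ 2\<bar>"
    using norm_le_l1_cart[of "x - y"] by (simp add: UNIV_2)
  then have "norm (x - y) \<le> s + s" using coord[of 1] coord[of 2] by linarith
  then show ?thesis using \<open>s \<le> diameter S\<close> by (simp add: dist_norm)
qed

lemma lfs_le_on_min_bounding_square:
  assumes "finite S" "card S \<ge> 2" "min_bounding_square S Q" "p \<in> Q"
  shows "lfs S p \<le> 2 * diameter S"
proof -
  obtain q q' where q: "q \<in> S" "q' \<in> S" "q \<noteq> q'" using card_ge_2E[OF assms(2)] .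
  have "S \<subseteq> Q" using assms(3) unfolding min_bounding_square_def by blast
  then have "dist p q \<le> 2 * diameter S" "dist p q' \<le> 2 * diameter S"
    using min_bounding_square_dist_le[OF assms(3,1)] assms(4) q by blast+
  then show ?thesis using lfs_le[OF assms(1) q, of p] by simp
qed

section \<open>Dominating 1/lfs by cube bumps\<close>

definition cube :: "pt \<Rightarrow> real \<Rightarrow> pt set" where
  "cube x r = cbox (x - (\<chi> i. r)) (x + (\<chi> i. r))"

definition cube_bump :: "pt \<Rightarrow> real \<Rightarrow> pt \<Rightarrow> real" where
  "cube_bump x r p = (if p \<in> cube x r then 1 / r else 0)"

lemma mem_cube_if_dist_le:
  assumes "dist p x \<le> r"
  shows "p \<in> cube x r"
proof -
  have "\<bar>p $ i - x $ i\<bar> \<le> r" for i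
    using component_le_norm_cart[of "p - x" i] assms by (simp add: dist_norm)
  then show ?thesis unfolding cube_def mem_box_cart by (simp add: abs_le_iff algebra_simps)
qed

lemma cube_bump_nonneg: "cube_bump x r p \<ge> 0"
proof -
  have "r \<ge> 0" if "p \<in> cube x r"
  proof -
    have "x $ 1 - r \<le> p $ 1" "p $ 1 \<le> x $ 1 + r"
      using that unfolding cube_def mem_box_cart by auto
    then show ?thesis by linarith
  qed
  then show ?thesis unfolding cube_bump_def by auto
qed

lemma measure_cube:
  assumes "r \<ge> 0"
  shows "measure lborel (cube x r) = 4 * r\<^sup>2"
proof -
  have "x \<in> cube x r" using mem_cube_if_dist_le assms by simp
  then have "measure lborel (cube x r) = (\<Prod>i\<in>UNIV. (x + (\<chi> i. r)) $ i - (x - (\<chi> i. r)) $ i)"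
    unfolding cube_def by (intro content_cbox_cart) blast
  also have "\<dots> = 4 * r\<^sup>2" by (simp add: UNIV_2 power2_eq_square)
  finally show ?thesis .
qed

lemma cube_bump_integrable_and_le:
  assumes "r \<ge> 0"
  shows "cube_bump x r integrable_on cbox a b" "integral (cbox a b) (cube_bump x r) \<le> 4 * r"
proof -
  obtain u v where uv: "cube x r \<inter> cbox a b = cbox u v"
    unfolding cube_def Int_interval by blast
  have bump: "cube_bump x r = (\<lambda>p. if p \<in> cube x r then 1 / r else 0)"
    unfolding cube_bump_def by blast
  show "cube_bump x r integrable_on cbox a b"
    using integrable_restrict_Int[of "cube x r" "\<lambda>p. 1 / r" "cbox a b"] uv bump
      integrable_const[of "1 / r" u v] by simp
  have "integral (cbox a b) (cube_bump x r) = measure lborel (cbox u v) * (1 / r)"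
    using integral_restrict_Int[of "cbox a b" "cube x r" "\<lambda>p. 1 / r"] uv bump by simp
  also have "\<dots> \<le> measure lborel (cube x r) * (1 / r)"
    using uv assms unfolding cube_def by (intro mult_right_mono content_subset) auto
  also have "\<dots> \<le> 4 * r"
    using measure_cube[OF assms] by (simp add: power2_eq_square)
  finally show "integral (cbox a b) (cube_bump x r) \<le> 4 * r" .
qed

lemma dyadic_cube_bumps_integrable_and_le:
  assumes "R \<ge> 0"
  shows "(\<lambda>p. \<Sum>k\<le>N. cube_bump x (R / 2^k) p) integrable_on cbox a b"
    "integral (cbox a b) (\<lambda>p. \<Sum>k\<le>N. cube_bump x (R / 2^k) p) \<le> 8 * R"
proof -
  have scale: "R / 2^k \<ge> 0" for k :: nat using assms by simp
  show "(\<lambda>p. \<Sum>k\<le>N. cube_bump x (R / 2^k) p) integrable_on cbox a b"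
    using cube_bump_integrable_and_le(1)[OF scale] by (intro integrable_sum) auto
  have "integral (cbox a b) (\<lambda>p. \<Sum>k\<le>N. cube_bump x (R / 2^k) p)
      = (\<Sum>k\<le>N. integral (cbox a b) (cube_bump x (R / 2^k)))"
    using cube_bump_integrable_and_le(1)[OF scale] by (intro integral_sum) auto
  also have "\<dots> \<le> (\<Sum>k\<le>N. 4 * R * (1/2)^k)"
    using cube_bump_integrable_and_le(2)[OF scale] by (intro sum_mono) (simp add: power_one_over)
  also have "\<dots> = 4 * R * (\<Sum>k\<le>N. (1/2)^k)"
    by (simp add: sum_distrib_left)
  also have "\<dots> \<le> 4 * R * 2"
  proof -
    have "(\<Sum>k\<le>N. (1/2::real)^k) = 2 - (1/2)^N" by (induction N) (auto simp: power_Suc)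
    then show ?thesis using assms by (intro mult_left_mono) auto
  qed
  finally show "integral (cbox a b) (\<lambda>p. \<Sum>k\<le>N. cube_bump x (R / 2^k) p) \<le> 8 * R"
    by simp
qed

lemma dyadic_scale_exists:
  fixes R x :: real
  assumes "x \<le> R" "R / 2^N < x"
  shows "\<exists>k\<le>N. x \<le> R / 2^k \<and> R / 2^k < 2 * x"
  using assms(2)
proof (induction N)
  case 0
  then show ?case using assms(1) by simp
next
  case (Suc N)
  show ?case
  proof (cases "R / 2^N < x")
    case True
    then show ?thesis using Suc.IH le_SucI by blast
  next
    case False
    then show ?thesis using Suc.prems by (intro exI[of _ N]) (auto simp: field_simps)
  qed
qed

definition cover_fun :: "pt set set \<Rightarrow> nat \<Rightarrow> pt \<Rightarrow> real" where
  "cover_fun H N p =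
     (\<Sum>P\<in>H. \<Sum>C\<in>children H P. \<Sum>k\<le>N. cube_bump (SOME x. x \<in> C) (3 * diameter P / 2^k) p)"

lemma cover_fun_integrable_and_le:
  assumes hc: "hierarchical_clustering S H" and "finite S"
  shows "cover_fun H N integrable_on cbox a b"
    "integral (cbox a b) (cover_fun H N) \<le> 48 * (\<Sum>P\<in>H. diameter P)"
proof -
  have cf: "cluster_family S H" using hierarchical_clustering_cluster_family[OF hc] .
  have "finite H" using finite_cluster_family[OF cf \<open>finite S\<close>] .
  have fin_children: "finite (children H P)" for P
    using \<open>finite H\<close> unfolding children_def by simp
  have diam_nonneg: "diameter P \<ge> 0" if "P \<in> H" for P
    using finite_cluster[OF cf \<open>finite S\<close> that] by (intro diameter_ge_0 finite_imp_bounded)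
  define g where "g P C = (\<lambda>p. \<Sum>k\<le>N. cube_bump (SOME x. x \<in> C) (3 * diameter P / 2^k) p)"
    for P C :: "pt set"
  have g: "g P C integrable_on cbox a b" "integral (cbox a b) (g P C) \<le> 24 * diameter P"
    if "P \<in> H" for P C
    using dyadic_cube_bumps_integrable_and_le[of "3 * diameter P"] diam_nonneg[OF that]
    unfolding g_def by auto
  have cover: "cover_fun H N = (\<lambda>p. \<Sum>P\<in>H. \<Sum>C\<in>children H P. g P C p)"
    unfolding cover_fun_def g_def by simp
  have children: "(\<lambda>p. \<Sum>C\<in>children H P. g P C p) integrable_on cbox a b"
    "integral (cbox a b) (\<lambda>p. \<Sum>C\<in>children H P. g P C p) \<le> 48 * diameter P"
    if "P \<in> H" for P
  proof -
    show "(\<lambda>p. \<Sum>C\<in>children H P. g P C p) integrable_on cbox a b"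
      using g(1)[OF that] fin_children by (intro integrable_sum) auto
    have "integral (cbox a b) (\<lambda>p. \<Sum>C\<in>children H P. g P C p)
        = (\<Sum>C\<in>children H P. integral (cbox a b) (g P C))"
      using g(1)[OF that] fin_children by (intro integral_sum) auto
    also have "\<dots> \<le> card (children H P) * (24 * diameter P)"
      using g(2)[OF that] sum_bounded_above[of "children H P"] by metis
    also have "\<dots> \<le> 2 * (24 * diameter P)"
      using card_children_le_2[OF hc that] diam_nonneg[OF that]
      by (intro mult_right_mono) auto
    finally show "integral (cbox a b) (\<lambda>p. \<Sum>C\<in>children H P. g P C p) \<le> 48 * diameter P"
      by simp
  qed
  show "cover_fun H N integrable_on cbox a b"
    unfolding cover by (rule integrable_sum) (use children(1) \<open>finite H\<close> in auto)
  have "integral (cbox a b) (cover_fun H N)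
      = (\<Sum>P\<in>H. integral (cbox a b) (\<lambda>p. \<Sum>C\<in>children H P. g P C p))"
    unfolding cover using children(1) \<open>finite H\<close> by (intro integral_sum) auto
  also have "\<dots> \<le> (\<Sum>P\<in>H. 48 * diameter P)"
    using children(2) by (intro sum_mono) auto
  finally show "integral (cbox a b) (cover_fun H N) \<le> 48 * (\<Sum>P\<in>H. diameter P)"
    by (simp add: sum_distrib_left)
qed

lemma cube_bump_le_cover_fun:
  assumes "finite H" "P \<in> H" "C \<in> children H P" "k \<le> N"
  shows "cube_bump (SOME x. x \<in> C) (3 * diameter P / 2^k) p \<le> cover_fun H N p"
proof -
  let ?bumps = "\<lambda>P C. \<Sum>k\<le>N. cube_bump (SOME x. x \<in> C) (3 * diameter P / 2^k) p"
  have "cube_bump (SOME x. x \<in> C) (3 * diameter P / 2^k) p \<le> ?bumps P C"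
    using assms(4) by (intro member_le_sum cube_bump_nonneg) auto
  also have "\<dots> \<le> (\<Sum>C\<in>children H P. ?bumps P C)"
    using assms(1,3) unfolding children_def by (intro member_le_sum sum_nonneg cube_bump_nonneg) auto
  also have "\<dots> \<le> cover_fun H N p"
    unfolding cover_fun_def using assms(1,2) by (intro member_le_sum sum_nonneg cube_bump_nonneg) auto
  finally show ?thesis .
qed

lemma inverse_lfs_le_cover_fun:
  assumes hc: "hierarchical_clustering S H" and fin: "finite S" "card S \<ge> 2"
    and upper: "lfs S p \<le> 2 * diameter S" and lower: "3 * diameter S / 2^N < lfs S p"
  shows "1 / lfs S p \<le> 3 * cover_fun H N p"
proof -
  define m where "m = lfs S p"
  have cf: "cluster_family S H" using hierarchical_clustering_cluster_family[OF hc] .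
  have "diameter S \<ge> 0" using fin(1) by (intro diameter_ge_0 finite_imp_bounded)
  then have "3 * diameter S / 2^N \<ge> 0" by simp
  then have "m > 0" using lower unfolding m_def by linarith
  obtain a q' where "a \<in> S" "q' \<in> S" "m = max (dist p a) (dist p q')"
    using lfs_attained[OF fin, of p] unfolding m_def by blast
  then have a: "a \<in> S" "dist p a \<le> m" by simp_all
  have "0 < m / 2" "m / 2 \<le> diameter S" using \<open>m > 0\<close> upper unfolding m_def by simp_all
  then obtain P C where PC: "P \<in> H" "C \<in> children H P" "a \<in> C"
    and diam: "diameter C < m / 2" "m / 2 \<le> diameter P"
    using cluster_family_child_at_scale[OF cf fin(1) a(1)] by blast
  define x where "x = (SOME x. x \<in> C)"
  have "x \<in> C" unfolding x_def using PC(3) by (rule someI)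
  have "C \<in> H" using PC(2) unfolding children_def by blast
  then have "dist a x \<le> diameter C"
    using finite_cluster[OF cf fin(1)] PC(3) \<open>x \<in> C\<close> by (intro diameter_bounded_bound finite_imp_bounded)
  then have px: "dist p x \<le> 3 * m / 2" using a(2) diam(1) dist_triangle[of p x a] by linarith
  have "diameter P \<le> diameter S"
    using cluster_familyD(2)[OF cf PC(1)] fin(1) by (intro diameter_subset finite_imp_bounded)
  then have "3 * diameter P / 2^N \<le> 3 * diameter S / 2^N" by (simp add: divide_right_mono)
  then have "3 * diameter P / 2^N < 3 * m / 2" using lower \<open>m > 0\<close> unfolding m_def by linarith
  then obtain k where k: "k \<le> N" "3 * m / 2 \<le> 3 * diameter P / 2^k" "3 * diameter P / 2^k < 3 * m"
    using dyadic_scale_exists[of "3 * m / 2" "3 * diameter P" N] diam(2) by auto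
  let ?r = "3 * diameter P / 2^k"
  have "p \<in> cube x ?r" using px k(2) by (intro mem_cube_if_dist_le) simp
  then have bump: "cube_bump x ?r p = 1 / ?r" unfolding cube_bump_def by simp
  have "?r > 0" using k(2) \<open>m > 0\<close> by linarith
  have "1 / m \<le> 3 * (1 / r)" if "0 < r" "r < 3 * m" for r
    using that by (simp add: field_simps)
  then have "1 / m \<le> 3 * (1 / ?r)" using \<open>?r > 0\<close> k(3) by blast
  also have "\<dots> = 3 * cube_bump x ?r p" using bump by simp
  also have "\<dots> \<le> 3 * cover_fun H N p"
    using cube_bump_le_cover_fun[OF finite_cluster_family[OF cf fin(1)] PC(1,2) k(1)]
    unfolding x_def by simp
  finally show ?thesis unfolding m_def .
qed

lemma integral_inverse_lfs_le:
  assumes hc: "hierarchical_clustering S H" and fin: "finite S" "card S \<ge> 2"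
    and sq: "min_bounding_square S Q"
  shows "integral Q (\<lambda>p. 1 / lfs S p) \<le> 144 * (\<Sum>P\<in>H. diameter P)"
proof -
  obtain r where r: "r > 0" "\<And>p. r \<le> lfs S p" using lfs_ge_half_separation[OF fin] by metis
  obtain N :: nat where "3 * diameter S / r < 2^N" using real_arch_pow[of 2] by auto
  then have "3 * diameter S / 2^N < r" using r(1) by (simp add: field_simps)
  then have lower: "3 * diameter S / 2^N < lfs S p" for p using r(2)[of p] by linarith
  obtain a s where Q: "Q = cbox a (a + (\<chi> i. s))" using sq unfolding min_bounding_square_def by blast
  note cover = cover_fun_integrable_and_le[OF hc fin(1), where N = N and a = a and
      b = "a + (\<chi> i. s)", folded Q]
  show ?thesis
  proof (cases "(\<lambda>p. 1 / lfs S p) integrable_on Q")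
    case True
    have "integral Q (\<lambda>p. 1 / lfs S p) \<le> integral Q (\<lambda>p. 3 * cover_fun H N p)"
      using True integrable_on_cmult_right[OF cover(1), of 3]
        inverse_lfs_le_cover_fun[OF hc fin lfs_le_on_min_bounding_square[OF fin sq] lower]
      by (intro integral_le) auto
    also have "\<dots> \<le> 144 * (\<Sum>P\<in>H. diameter P)" using cover(2) by simp
    finally show ?thesis .
  next
    case False
    have "(\<Sum>P\<in>H. diameter P) \<ge> 0"
      using finite_cluster[OF hierarchical_clustering_cluster_family[OF hc] fin(1)]
      by (intro sum_nonneg diameter_ge_0 finite_imp_bounded)
    then show ?thesis using not_integrable_integral[OF False] by simp
  qed
qed

theorem lemma10:
  "\<exists>c::real. c > 0 \<and>
     (\<forall>(S::pt set) Q H. finite S \<and> card S \<ge> 2 \<and> min_bounding_square S Q \<and>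
        hierarchical_clustering S H \<longrightarrow>
        c * integral Q (\<lambda>p. 1 / lfs S p) \<le> (\<Sum>C\<in>H. hull_perimeter C))"
proof (intro exI[of _ "1 / 144"] conjI allI impI)
  fix S :: "pt set" and Q H
  assume "finite S \<and> card S \<ge> 2 \<and> min_bounding_square S Q \<and> hierarchical_clustering S H"
  then have fin: "finite S" "card S \<ge> 2" and sq: "min_bounding_square S Q"
    and hc: "hierarchical_clustering S H" by auto
  have cf: "cluster_family S H" using hierarchical_clustering_cluster_family[OF hc] .
  have "(\<Sum>C\<in>H. diameter C) \<le> (\<Sum>C\<in>H. hull_perimeter C)"
    using finite_cluster[OF cf fin(1)] cluster_familyD(1)[OF cf]
    by (intro sum_mono diameter_le_hull_perimeter)
  then show "1 / 144 * integral Q (\<lambda>p. 1 / lfs S p) \<le> (\<Sum>C\<in>H. hull_perimeter C)"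
    using integral_inverse_lfs_le[OF hc fin sq] by simp
qed simp

end
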